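(* Let $X$ and $\Theta$ be compact metric spaces, $\tau:\Theta\times X\to X$, $(\theta,x)\mapsto\tau_\theta(x)$, continuous, $\Omega=X\times\Theta$, and $\mathcal{H}$ the set of holonomic Borel probability measures on $\Omega$, i.e. those $\hat\nu$ with $\int_\Omega [f(\tau_\theta(x))-f(x)]\,d\hat\nu(x,\theta)=0$ for all $f\in C(X,\mathbb{R})$; for $\hat\nu\in\mathcal{H}$ write $\nu=\pi_*\hat\nu$ for its marginal on $X$ ($\pi:\Omega\to X$ the projection). Let $\mu$ be a Borel probability on $\Theta$, let $\psi:X\to\mathbb{R}$ be a positive continuous function, let $dq_x(\theta)=\psi(\tau_\theta(x))\,d\mu(\theta)$, and $B_q(g)(x)=\int_\Theta g(\tau_\theta(x))\,dq_x(\theta)$, $B_\mu(g)(x)=\int_\Theta g(\tau_\theta(x))\,d\mu(\theta)$. Define the topological pressure \[ P(\psi)=\sup_{\hat\nu\in\mathcal{H}}\ \inf_{g\in C(X,\mathbb{R}),\,g>0}\int_X\ln\frac{B_q(g)}{g}\,d\nu, \] and the variational entropy $h_v(\hat\nu)=\inf_{g\in C(X,\mathbb{R}),\,g>0}\int_X\ln\frac{B_\mu(g)}{g}\,d\nu$. Then \[ P(\psi)=\sup_{\hat\nu\in\mathcal{H}}\Big\{h_v(\hat\nu)+\int_X\log\psi\,d\nu\Big\}. \] *)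

theory Defs
  imports "HOL-Probability.Probability"
begin

definition holonomic :: "('t \<Rightarrow> 'x \<Rightarrow> 'x) \<Rightarrow> ('x::metric_space \<times> 't::metric_space) measure \<Rightarrow> bool" where
  "holonomic tau N \<longleftrightarrow> prob_space N \<and> sets N = sets borel \<and>
     (\<forall>f::'x \<Rightarrow> real. continuous_on UNIV f \<longrightarrow>
        (\<integral>w. f (tau (snd w) (fst w)) - f (fst w) \<partial>N) = 0)"

definition holonomic_set :: "('t \<Rightarrow> 'x \<Rightarrow> 'x) \<Rightarrow> ('x::metric_space \<times> 't::metric_space) measure set" where
  "holonomic_set tau = {N. holonomic tau N}"

definition marginal :: "('x::metric_space \<times> 't::metric_space) measure \<Rightarrow> 'x measure" where
  "marginal N = distr N borel fst"

definition B_mu :: "'t measure \<Rightarrow> ('t \<Rightarrow> 'x \<Rightarrow> 'x) \<Rightarrow> ('x \<Rightarrow> real) \<Rightarrow> 'x \<Rightarrow> real" where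
  "B_mu mu tau g x = (\<integral>\<theta>. g (tau \<theta> x) \<partial>mu)"

text \<open>d q_x(theta) = psi(tau_theta x) d mu(theta).\<close>
definition B_q :: "'t measure \<Rightarrow> ('t \<Rightarrow> 'x \<Rightarrow> 'x) \<Rightarrow> ('x \<Rightarrow> real) \<Rightarrow> ('x \<Rightarrow> real) \<Rightarrow> 'x \<Rightarrow> real" where
  "B_q mu tau psi g x = (\<integral>\<theta>. g (tau \<theta> x) * psi (tau \<theta> x) \<partial>mu)"

definition pos_cont :: "('x::topological_space \<Rightarrow> real) set" where
  "pos_cont = {g. continuous_on UNIV g \<and> (\<forall>x. g x > 0)}"

definition pressure :: "'t::metric_space measure \<Rightarrow> ('t \<Rightarrow> 'x \<Rightarrow> 'x) \<Rightarrow> ('x::metric_space \<Rightarrow> real) \<Rightarrow> ereal" where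
  "pressure mu tau psi =
     (SUP N \<in> holonomic_set tau. INF g \<in> pos_cont.
        ereal (\<integral>x. ln (B_q mu tau psi g x / g x) \<partial>marginal N))"

definition var_entropy :: "'t::metric_space measure \<Rightarrow> ('t \<Rightarrow> 'x \<Rightarrow> 'x) \<Rightarrow> ('x::metric_space \<times> 't) measure \<Rightarrow> ereal" where
  "var_entropy mu tau N =
     (INF g \<in> pos_cont. ereal (\<integral>x. ln (B_mu mu tau g x / g x) \<partial>marginal N))"

end

theory Submission
  imports Defs
begin

text \<open>Substituting \<open>h = g \<psi>\<close> turns \<open>B\<^sub>q(g)/g\<close> into \<open>\<psi> B\<^sub>\<mu>(h)/h\<close>.  Since multiplication by
  \<open>\<psi>\<close> permutes the positive continuous functions, for every measure \<open>\<nu>\<close> the infimum defining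
  the pressure is the infimum defining the variational entropy shifted by \<open>\<integral> ln \<psi> d\<nu>\<close>; the
  identity therefore holds term by term inside the supremum.\<close>

lemma INF_add_ereal_const:
  fixes f :: "'a \<Rightarrow> ereal"
  shows "(INF i\<in>I. f i + ereal c) = (INF i\<in>I. f i) + ereal c"
proof (rule antisym)
  show "(INF i\<in>I. f i) + ereal c \<le> (INF i\<in>I. f i + ereal c)"
    by (rule INF_greatest) (intro add_right_mono INF_lower)
next
  have "(INF i\<in>I. f i + ereal c) + ereal (- c) \<le> (INF i\<in>I. f i)"
  proof (rule INF_greatest)
    fix i assume "i \<in> I"
    then have "(INF i\<in>I. f i + ereal c) + ereal (- c) \<le> (f i + ereal c) + ereal (- c)"
      by (intro add_right_mono INF_lower)
    also have "\<dots> = f i"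
      by (cases "f i") auto
    finally show "(INF i\<in>I. f i + ereal c) + ereal (- c) \<le> f i" .
  qed
  then have "(INF i\<in>I. f i + ereal c) + ereal (- c) + ereal c \<le> (INF i\<in>I. f i) + ereal c"
    by (rule add_right_mono)
  then show "(INF i\<in>I. f i + ereal c) \<le> (INF i\<in>I. f i) + ereal c"
    by (cases "INF i\<in>I. f i + ereal c") auto
qed

lemma
  fixes f :: "'a::topological_space \<Rightarrow> 'b::topological_space \<Rightarrow> 'c::topological_space"
  assumes "continuous_on UNIV (\<lambda>(a, b). f a b)"
  shows continuous_on_curry_left: "continuous_on UNIV (\<lambda>a. f a b)"
    and continuous_on_curry_right: "continuous_on UNIV (f a)"
proof -
  have "continuous_on UNIV (\<lambda>a. (\<lambda>(a, b). f a b) (a, b))"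
    by (rule continuous_on_compose2[OF assms]) (auto intro!: continuous_intros)
  then show "continuous_on UNIV (\<lambda>a. f a b)"
    by simp
  have "continuous_on UNIV (\<lambda>b. (\<lambda>(a, b). f a b) (a, b))"
    by (rule continuous_on_compose2[OF assms]) (auto intro!: continuous_intros)
  then show "continuous_on UNIV (f a)"
    by simp
qed

lemma bounded_continuous_compact:
  fixes f :: "'a::metric_space \<Rightarrow> real"
  assumes "compact (UNIV :: 'a set)" and "continuous_on UNIV f"
  obtains B where "\<And>x. \<bar>f x\<bar> \<le> B"
proof -
  have "bounded (range f)"
    using compact_imp_bounded compact_continuous_image[OF assms(2,1)] by blast
  then show ?thesis
    using that by (auto simp: bounded_iff)
qed

lemma integrable_bounded_continuous:
  fixes f :: "'a::topological_space \<Rightarrow> real"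
  assumes "finite_measure M" and "sets M = sets borel"
    and "continuous_on UNIV f" and "\<And>x. \<bar>f x\<bar> \<le> B"
  shows "integrable M f"
proof (rule finite_measure.integrable_const_bound[OF assms(1)])
  show "f \<in> borel_measurable M"
    using borel_measurable_continuous_onI[OF assms(3)] measurable_cong_sets[OF assms(2) refl] by blast
qed (use assms(4) in auto)

lemma integrable_continuous_compact:
  fixes f :: "'a::metric_space \<Rightarrow> real"
  assumes "compact (UNIV :: 'a set)" and "continuous_on UNIV f"
    and "finite_measure M" and "sets M = sets borel"
  shows "integrable M f"
  using bounded_continuous_compact[OF assms(1,2)] integrable_bounded_continuous[OF assms(3,4,2)]
  by blast

lemma continuous_on_parametric_integral:
  fixes F :: "'t::topological_space \<Rightarrow> 'x::metric_space \<Rightarrow> real"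
  assumes M: "finite_measure M" "sets M = sets borel"
    and cont_t: "\<And>x. continuous_on UNIV (\<lambda>\<theta>. F \<theta> x)"
    and cont_x: "\<And>\<theta>. continuous_on UNIV (F \<theta>)"
    and bound: "\<And>\<theta> x. \<bar>F \<theta> x\<bar> \<le> B"
  shows "continuous_on UNIV (\<lambda>x. \<integral>\<theta>. F \<theta> x \<partial>M)"
proof (rule continuous_on_sequentiallyI)
  fix s :: "nat \<Rightarrow> 'x" and x assume s: "s \<longlonglongrightarrow> x"
  have lim: "(\<lambda>n. F \<theta> (s n)) \<longlonglongrightarrow> F \<theta> x" for \<theta>
    using continuous_on_tendsto_compose[OF cont_x s] by simp
  have meas: "(\<lambda>\<theta>. F \<theta> y) \<in> borel_measurable M" for y
    using borel_measurable_continuous_onI[OF cont_t] measurable_cong_sets[OF M(2) refl] by blast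
  have "integrable M (\<lambda>_. B)"
    using M(1) by (simp add: finite_measure.integrable_const)
  then show "(\<lambda>n. \<integral>\<theta>. F \<theta> (s n) \<partial>M) \<longlonglongrightarrow> (\<integral>\<theta>. F \<theta> x \<partial>M)"
    by (rule integral_dominated_convergence[where w = "\<lambda>_. B", OF meas meas])
      (simp_all add: lim bound)
qed

lemma continuous_on_B_mu:
  fixes tau :: "'t::metric_space \<Rightarrow> 'x::metric_space \<Rightarrow> 'x"
  assumes "compact (UNIV :: 'x set)" and tau: "continuous_on UNIV (\<lambda>(\<theta>, x). tau \<theta> x)"
    and "finite_measure mu" and "sets mu = sets borel"
    and h: "continuous_on UNIV h"
  shows "continuous_on UNIV (B_mu mu tau h)"
proof -
  obtain B where "\<And>x. \<bar>h x\<bar> \<le> B"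
    using bounded_continuous_compact[OF assms(1) h] by blast
  then show ?thesis
    unfolding B_mu_def
    using assms(3,4) continuous_on_compose2[OF h continuous_on_curry_left[OF tau]]
      continuous_on_compose2[OF h continuous_on_curry_right[OF tau]]
    by (intro continuous_on_parametric_integral) auto
qed

lemma B_mu_pos:
  fixes tau :: "'t::metric_space \<Rightarrow> 'x::metric_space \<Rightarrow> 'x"
  assumes "compact (UNIV :: 'x set)" and tau: "continuous_on UNIV (\<lambda>(\<theta>, x). tau \<theta> x)"
    and "prob_space mu" and "sets mu = sets borel"
    and h: "h \<in> pos_cont"
  shows "B_mu mu tau h x > 0"
proof -
  interpret prob_space mu by fact
  have hc: "continuous_on UNIV h" and hpos: "\<And>y. h y > 0"
    using h by (auto simp: pos_cont_def)
  obtain y0 where y0: "\<And>y. h y0 \<le> h y"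
    using compact_attains_inf[OF compact_continuous_image[OF hc assms(1)]] by auto
  obtain B where "\<And>y. \<bar>h y\<bar> \<le> B"
    using bounded_continuous_compact[OF assms(1) hc] by blast
  then have "integrable mu (\<lambda>\<theta>. h (tau \<theta> x))"
    using continuous_on_compose2[OF hc continuous_on_curry_left[OF tau]] assms(4)
    by (intro integrable_bounded_continuous[where B = B]) (auto intro: finite_measure_axioms)
  then have "h y0 \<le> B_mu mu tau h x"
    unfolding B_mu_def using y0 by (intro integral_ge_const) auto
  then show ?thesis
    using hpos[of y0] by linarith
qed

lemma mult_mem_pos_cont:
  "g \<in> pos_cont \<Longrightarrow> h \<in> pos_cont \<Longrightarrow> (\<lambda>x. g x * h x) \<in> pos_cont"
  by (auto simp: pos_cont_def intro!: continuous_intros)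

lemma inverse_mem_pos_cont:
  "h \<in> pos_cont \<Longrightarrow> (\<lambda>x. inverse (h x)) \<in> pos_cont"
  by (auto simp: pos_cont_def intro!: continuous_intros dest: less_imp_neq[symmetric])

lemma image_mult_pos_cont:
  fixes psi :: "'a::topological_space \<Rightarrow> real"
  assumes psi: "psi \<in> pos_cont"
  shows "(\<lambda>g x. g x * psi x) ` pos_cont = pos_cont"
proof (intro equalityI subsetI)
  fix h assume "h \<in> (\<lambda>g x. g x * psi x) ` pos_cont"
  then show "h \<in> pos_cont"
    using mult_mem_pos_cont psi by blast
next
  fix h :: "'a \<Rightarrow> real" assume h: "h \<in> pos_cont"
  have "psi x \<noteq> 0" for x
    using psi by (auto simp: pos_cont_def dest: spec[of _ x])
  then have "h = (\<lambda>x. (h x * inverse (psi x)) * psi x)"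
    by (simp add: fun_eq_iff mult.assoc)
  moreover have "(\<lambda>x. h x * inverse (psi x)) \<in> pos_cont"
    using h psi by (intro mult_mem_pos_cont inverse_mem_pos_cont)
  ultimately show "h \<in> (\<lambda>g x. g x * psi x) ` pos_cont"
    by (rule image_eqI)
qed

lemma ln_B_q_div:
  fixes tau :: "'t::metric_space \<Rightarrow> 'x::metric_space \<Rightarrow> 'x"
  assumes "compact (UNIV :: 'x set)" and "continuous_on UNIV (\<lambda>(\<theta>, x). tau \<theta> x)"
    and "prob_space mu" and "sets mu = sets borel"
    and g: "g \<in> pos_cont" and psi: "psi \<in> pos_cont"
  shows "ln (B_q mu tau psi g x / g x)
    = ln (B_mu mu tau (\<lambda>y. g y * psi y) x / (g x * psi x)) + ln (psi x)"
proof -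
  have "B_mu mu tau (\<lambda>y. g y * psi y) x > 0"
    using B_mu_pos[OF assms(1-4) mult_mem_pos_cont[OF g psi]] .
  moreover have "g x > 0" "psi x > 0"
    using g psi by (auto simp: pos_cont_def)
  moreover have "B_q mu tau psi g x = B_mu mu tau (\<lambda>y. g y * psi y) x"
    by (simp add: B_q_def B_mu_def)
  ultimately show ?thesis
    by (simp add: ln_div ln_mult)
qed

lemma integral_ln_B_q_div:
  fixes tau :: "'t::metric_space \<Rightarrow> 'x::metric_space \<Rightarrow> 'x"
  assumes "compact (UNIV :: 'x set)" and tau: "continuous_on UNIV (\<lambda>(\<theta>, x). tau \<theta> x)"
    and mu: "prob_space mu" "sets mu = sets borel"
    and g: "g \<in> pos_cont" and psi: "psi \<in> pos_cont"
    and nu: "finite_measure nu" "sets nu = sets borel"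
  shows "(\<integral>x. ln (B_q mu tau psi g x / g x) \<partial>nu)
    = (\<integral>x. ln (B_mu mu tau (\<lambda>y. g y * psi y) x / (g x * psi x)) \<partial>nu) + (\<integral>x. ln (psi x) \<partial>nu)"
proof -
  define h where "h = (\<lambda>y. g y * psi y)"
  have h: "h \<in> pos_cont"
    unfolding h_def using g psi by (rule mult_mem_pos_cont)
  have "continuous_on UNIV (B_mu mu tau h)"
    using h mu by (intro continuous_on_B_mu[OF assms(1) tau]) (auto simp: pos_cont_def prob_space_def)
  moreover have "B_mu mu tau h x \<noteq> 0" "h x \<noteq> 0" "psi x \<noteq> 0" for x
    using B_mu_pos[OF assms(1) tau mu h, of x] h psi by (auto simp: pos_cont_def dest: spec[of _ x])
  ultimately have "continuous_on UNIV (\<lambda>x. ln (B_mu mu tau h x / h x))"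
    and "continuous_on UNIV (\<lambda>x. ln (psi x))"
    using h psi by (auto simp: pos_cont_def intro!: continuous_intros)
  then show ?thesis
    unfolding ln_B_q_div[OF assms(1-4) g psi] h_def
    by (intro Bochner_Integration.integral_add integrable_continuous_compact[OF assms(1) _ nu])
qed

lemma INF_integral_ln_B_q_div:
  fixes tau :: "'t::metric_space \<Rightarrow> 'x::metric_space \<Rightarrow> 'x"
  assumes "compact (UNIV :: 'x set)" and "continuous_on UNIV (\<lambda>(\<theta>, x). tau \<theta> x)"
    and "prob_space mu" and "sets mu = sets borel" and psi: "psi \<in> pos_cont"
    and "finite_measure nu" and "sets nu = sets borel"
  shows "(INF g\<in>pos_cont. ereal (\<integral>x. ln (B_q mu tau psi g x / g x) \<partial>nu))
    = (INF h\<in>pos_cont. ereal (\<integral>x. ln (B_mu mu tau h x / h x) \<partial>nu)) + ereal (\<integral>x. ln (psi x) \<partial>nu)"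
proof -
  let ?E = "\<lambda>h. ereal (\<integral>x. ln (B_mu mu tau h x / h x) \<partial>nu)"
  have "(INF g\<in>pos_cont. ereal (\<integral>x. ln (B_q mu tau psi g x / g x) \<partial>nu))
      = (INF g\<in>pos_cont. ?E (\<lambda>x. g x * psi x) + ereal (\<integral>x. ln (psi x) \<partial>nu))"
    using integral_ln_B_q_div[OF assms(1-4) _ psi assms(6,7)] by (intro INF_cong) simp_all
  also have "\<dots> = (INF g\<in>pos_cont. ?E (\<lambda>x. g x * psi x)) + ereal (\<integral>x. ln (psi x) \<partial>nu)"
    by (rule INF_add_ereal_const)
  also have "(INF g\<in>pos_cont. ?E (\<lambda>x. g x * psi x)) = (INF h\<in>pos_cont. ?E h)"
    by (subst (2) image_mult_pos_cont[OF psi, symmetric]) (simp add: image_image)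
  finally show ?thesis .
qed

lemma prob_space_marginal:
  assumes "prob_space N" and "sets N = sets borel"
  shows "prob_space (marginal N)"
  unfolding marginal_def
proof (rule prob_space.prob_space_distr[OF assms(1)])
  show "fst \<in> measurable N borel"
    using measurable_cong_sets[OF assms(2) refl]
      borel_measurable_continuous_onI[OF continuous_on_fst[OF continuous_on_id]] by auto
qed

theorem mainTheorem6:
  fixes tau :: "'t::metric_space \<Rightarrow> 'x::metric_space \<Rightarrow> 'x"
    and mu :: "'t measure" and psi :: "'x \<Rightarrow> real"
  assumes "compact (UNIV :: 'x set)" and "compact (UNIV :: 't set)"
    and "continuous_on UNIV (\<lambda>(\<theta>, x). tau \<theta> x)"
    and "prob_space mu" and "sets mu = sets borel"
    and "continuous_on UNIV psi" and "\<forall>x. psi x > 0"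
  shows "pressure mu tau psi =
    (SUP N \<in> holonomic_set tau. var_entropy mu tau N + ereal (\<integral>x. ln (psi x) \<partial>marginal N))"
  unfolding pressure_def var_entropy_def
proof (rule SUP_cong[OF refl])
  fix N assume "N \<in> holonomic_set tau"
  then have "prob_space (marginal N)"
    by (intro prob_space_marginal) (auto simp: holonomic_set_def holonomic_def)
  moreover have "psi \<in> pos_cont"
    using assms(6,7) by (simp add: pos_cont_def)
  ultimately show "(INF g\<in>pos_cont. ereal (\<integral>x. ln (B_q mu tau psi g x / g x) \<partial>marginal N))
    = (INF h\<in>pos_cont. ereal (\<integral>x. ln (B_mu mu tau h x / h x) \<partial>marginal N))
      + ereal (\<integral>x. ln (psi x) \<partial>marginal N)"
    using assms(1,3-5) by (intro INF_integral_ln_B_q_div) (auto simp: marginal_def prob_space_def)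
qed

end
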